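(* There exists a universal constant $c>0$ with the following property. Let $d,m,n\ge3$ be integers satisfying $d\le m\le n$ and $n\ge (m\log m)/d$. Suppose that $s\in\mathbb{N}$ satisfies $$s\le\frac{c}{d}\left(\frac{m^d}{n^2}\right)^{\frac{1}{d-2}}.$$ Then there exists an $m$-by-$n$ matrix $A$ with entries in $\{0,1\}$ such that: (i) any $s$ of the columns of $A$ are linearly independent over the field $\mathbb{Z}/(2\mathbb{Z})$; (ii) every column of $A$ has at most $d$ nonzero entries; (iii) every row of $A$ has at most $5dn/m$ nonzero entries.
   Context: $\log$ is the natural logarithm. *)

theory Defs
  imports Complex_Main "HOL-Library.Z2"
begin

text \<open>An m-by-n matrix over the field Z/2Z (type bit) is represented as
  A :: nat => nat => bit, entry (i,j) = A i j for i < m, j < n.\<close>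

definition gf2_cols_lin_indep :: "nat \<Rightarrow> (nat \<Rightarrow> nat \<Rightarrow> bit) \<Rightarrow> nat set \<Rightarrow> bool" where
  "gf2_cols_lin_indep m A S \<longleftrightarrow>
     (\<forall>f :: nat \<Rightarrow> bit. (\<forall>i<m. (\<Sum>j\<in>S. f j * A i j) = 0) \<longrightarrow> (\<forall>j\<in>S. f j = 0))"

end

theory Submission
  imports Defs "HOL-Library.FuncSet"
begin

text \<open>Every column j chooses d row indices r(j,0), ..., r(j,d-1) in [m], and A(i,j) is the
  parity of the number of k with r(j,k) = i, so every column has at most d nonzero entries.
  A nonempty set T of columns sums to zero over GF(2) only if r takes every value an even
  number of times on T \<times> [d]. Pairing each point with a partner of equal value shows that at
  most (q m)^(q/2) of the m^q maps on q points have all fibres even. Together with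
  C(n,t) \<le> (3n/t)^t, the bound on s makes the assignments with a dependency among t columns a
  fraction at most 4^(-t) of all, so fewer than a third of them have a dependency among at
  most s columns. Choosing K > 5dn/m positions that hit a given row shows, since nd \<ge> m ln m,
  that at most a third of them put more than 5dn/m entries into some row. Hence some
  assignment does neither.\<close>

lemma power_le_exp_mult_fact:
  fixes x :: real
  assumes "0 \<le> x"
  shows "x ^ k \<le> exp x * fact k"
proof -
  have series: "(\<lambda>n. x ^ n /\<^sub>R fact n) sums exp x" by (rule exp_converges)
  have "(\<Sum>n\<in>{k}. x ^ n /\<^sub>R fact n) \<le> (\<Sum>n. x ^ n /\<^sub>R fact n)"
    using assms by (intro sum_le_suminf sums_summable[OF series]) auto
  then have "x ^ k / fact k \<le> exp x" using sums_unique[OF series] by (simp add: divide_inverse mult.commute)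
  then show ?thesis by (simp add: divide_simps)
qed

lemma binomial_mult_power_le: "real (n choose k) * real k ^ k \<le> (3 * real n) ^ k"
proof -
  have "real k ^ k \<le> exp (real k) * fact k" by (rule power_le_exp_mult_fact) simp
  also have "\<dots> = exp 1 ^ k * fact k" using exp_of_nat_mult[of k 1] by simp
  also have "\<dots> \<le> 3 ^ k * fact k"
    using exp_le by (intro mult_right_mono power_mono) auto
  finally have "real (n choose k) * real k ^ k \<le> 3 ^ k * (real (n choose k) * fact k)"
    by (simp add: mult_left_mono mult.left_commute)
  also have "real (n choose k) * fact k \<le> real n ^ k"
  proof (cases "k \<le> n")
    case True
    have "real (n choose k) * fact k = real (fact n div fact (n - k))"
      using fact_binomial[OF True, where 'a=real]
      by (simp add: real_of_nat_div fact_dvd mult.commute)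
    also have "\<dots> \<le> real n ^ k"
      by (metis fact_div_fact_le_pow[OF True] of_nat_le_iff of_nat_power)
    finally show ?thesis .
  qed (simp add: binomial_eq_0)
  finally show ?thesis by (simp add: power_mult_distrib)
qed

lemma binomial_le_power_div: "0 < k \<Longrightarrow> real (n choose k) \<le> (3 * real n / real k) ^ k"
  using binomial_mult_power_le[of n k] by (simp add: power_divide pos_le_divide_eq)

definition even_fibres :: "('a \<Rightarrow> 'b) \<Rightarrow> 'a set \<Rightarrow> bool" where
  "even_fibres g Q \<longleftrightarrow> (\<forall>v. even (card {p \<in> Q. g p = v}))"

definition even_fibre_maps :: "nat \<Rightarrow> 'a set \<Rightarrow> ('a \<Rightarrow> nat) set" where
  "even_fibre_maps m Q = {g \<in> Q \<rightarrow>\<^sub>E {..<m}. even_fibres g Q}"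

lemma even_fibres_cong:
  assumes "\<And>p. p \<in> Q \<Longrightarrow> g p = h p"
  shows "even_fibres g Q \<longleftrightarrow> even_fibres h Q"
proof -
  have "{p \<in> Q. g p = v} = {p \<in> Q. h p = v}" for v using assms by auto
  then show ?thesis by (simp add: even_fibres_def)
qed

lemma even_card_if_even_fibres:
  assumes "finite Q" "even_fibres g Q"
  shows "even (card Q)"
proof -
  have "card Q = (\<Sum>v\<in>g ` Q. card {p \<in> Q. g p = v})"
    using sum.image_gen[OF assms(1), of "\<lambda>_. 1 :: nat" g] by simp
  then show ?thesis using assms(2) by (simp add: even_fibres_def dvd_sum)
qed

lemma even_fibres_partner:
  assumes "finite Q" "x \<in> Q" "even_fibres g Q"
  obtains y where "y \<in> Q" "y \<noteq> x" "g y = g x"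
proof -
  have "{p \<in> Q. g p = g x} \<noteq> {x}"
  proof
    assume "{p \<in> Q. g p = g x} = {x}"
    then have "odd (card {p \<in> Q. g p = g x})" by simp
    then show False using assms(3) by (simp add: even_fibres_def)
  qed
  then have "\<exists>y\<in>Q. y \<noteq> x \<and> g y = g x" using assms(2) by blast
  then show ?thesis using that by blast
qed

lemma even_fibres_Diff_pair:
  assumes "finite Q" "even_fibres g Q" "x \<in> Q" "y \<in> Q" "x \<noteq> y" "g y = g x"
  shows "even_fibres g (Q - {x, y})"
  unfolding even_fibres_def
proof
  fix v
  show "even (card {p \<in> Q - {x, y}. g p = v})"
  proof (cases "v = g x")
    case True
    have "{p \<in> Q - {x, y}. g p = v} = {p \<in> Q. g p = v} - {x, y}" by auto
    moreover have "{x, y} \<subseteq> {p \<in> Q. g p = v}" using assms True by auto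
    ultimately have "card {p \<in> Q - {x, y}. g p = v} + 2 = card {p \<in> Q. g p = v}"
      using assms(1,5) card_mono[of "{p \<in> Q. g p = v}" "{x, y}"]
      by (simp add: card_Diff_subset)
    moreover have "even (card {p \<in> Q. g p = v})" using assms(2) by (simp add: even_fibres_def)
    ultimately show ?thesis by presburger
  next
    case False
    then have "{p \<in> Q - {x, y}. g p = v} = {p \<in> Q. g p = v}" using assms by auto
    then show ?thesis using assms(2) by (simp add: even_fibres_def)
  qed
qed

lemma finite_even_fibre_maps: "finite Q \<Longrightarrow> finite (even_fibre_maps m Q)"
  unfolding even_fibre_maps_def by (rule finite_subset[of _ "Q \<rightarrow>\<^sub>E {..<m}"]) (auto intro: finite_PiE)

lemma restrict_Diff_pair_in_even_fibre_maps:
  assumes "finite Q" "g \<in> even_fibre_maps m Q" "x \<in> Q" "y \<in> Q" "x \<noteq> y" "g y = g x"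
  shows "restrict g (Q - {x, y}) \<in> even_fibre_maps m (Q - {x, y})"
proof -
  have "even_fibres g (Q - {x, y})"
    using assms by (intro even_fibres_Diff_pair) (auto simp: even_fibre_maps_def)
  then have "even_fibres (restrict g (Q - {x, y})) (Q - {x, y})"
    using even_fibres_cong[of "Q - {x, y}" "restrict g (Q - {x, y})" g] by simp
  moreover have "restrict g (Q - {x, y}) \<in> (Q - {x, y}) \<rightarrow>\<^sub>E {..<m}"
    using assms(2) by (auto simp: even_fibre_maps_def)
  ultimately show ?thesis by (simp add: even_fibre_maps_def)
qed

text \<open>A map with even fibres is determined by a partner y of a fixed point x,
  the common value at x and y, and its restriction to the remaining points.\<close>

lemma card_even_fibre_maps_le_sum:
  assumes "finite Q" "x \<in> Q"
  shows "card (even_fibre_maps m Q)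
    \<le> (\<Sum>y\<in>Q - {x}. m * card (even_fibre_maps m (Q - {x, y})))"
proof -
  define partner where "partner g = (SOME y. y \<in> Q \<and> y \<noteq> x \<and> g y = g x)" for g :: "'a \<Rightarrow> nat"
  have partner: "partner g \<in> Q \<and> partner g \<noteq> x \<and> g (partner g) = g x"
    if "g \<in> even_fibre_maps m Q" for g
  proof -
    have "even_fibres g Q" using that by (simp add: even_fibre_maps_def)
    then obtain y where "y \<in> Q \<and> y \<noteq> x \<and> g y = g x"
      using even_fibres_partner[OF assms] by metis
    then show ?thesis unfolding partner_def by (rule someI)
  qed
  define \<Phi> where "\<Phi> g = (partner g, g x, restrict g (Q - {x, partner g}))" for g
  define S where "S = Sigma (Q - {x}) (\<lambda>y. {..<m} \<times> even_fibre_maps m (Q - {x, y}))"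
  have "inj_on \<Phi> (even_fibre_maps m Q)"
  proof (rule inj_onI)
    fix g h assume g: "g \<in> even_fibre_maps m Q" and h: "h \<in> even_fibre_maps m Q"
      and "\<Phi> g = \<Phi> h"
    then have same_partner: "partner g = partner h" and "g x = h x"
      and rest: "restrict g (Q - {x, partner g}) = restrict h (Q - {x, partner g})"
      by (auto simp: \<Phi>_def)
    show "g = h"
    proof (rule extensionalityI)
      show "g \<in> extensional Q" "h \<in> extensional Q"
        using g h by (auto simp: even_fibre_maps_def PiE_def)
      fix p assume "p \<in> Q"
      then consider "p = x" | "p = partner g" | "p \<in> Q - {x, partner g}" by blast
      then show "g p = h p"
      proof cases
        case 1
        then show ?thesis using \<open>g x = h x\<close> by simp
      next
        case 2
        then show ?thesis using partner[OF g] partner[OF h] same_partner \<open>g x = h x\<close> by simp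
      next
        case 3
        then show ?thesis using fun_cong[OF rest, of p] by simp
      qed
    qed
  qed
  moreover have "\<Phi> ` even_fibre_maps m Q \<subseteq> S"
  proof
    fix z assume "z \<in> \<Phi> ` even_fibre_maps m Q"
    then obtain g where g: "g \<in> even_fibre_maps m Q" and z: "z = \<Phi> g" by auto
    have rest: "restrict g (Q - {x, partner g}) \<in> even_fibre_maps m (Q - {x, partner g})"
      using partner[OF g] by (intro restrict_Diff_pair_in_even_fibre_maps[OF assms(1) g assms(2)]) auto
    have "g x < m" using g assms(2) by (auto simp: even_fibre_maps_def)
    then show "z \<in> S" using partner[OF g] rest unfolding z \<Phi>_def S_def by simp
  qed
  moreover have "finite S"
    unfolding S_def using assms(1) by (intro finite_SigmaI finite_cartesian_product finite_even_fibre_maps) auto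
  ultimately have "card (even_fibre_maps m Q) \<le> card S" by (rule card_inj_on_le)
  also have "card S = (\<Sum>y\<in>Q - {x}. m * card (even_fibre_maps m (Q - {x, y})))"
    unfolding S_def using assms(1)
    by (subst card_SigmaI) (auto simp: card_cartesian_product intro!: finite_even_fibre_maps)
  finally show ?thesis .
qed

lemma card_even_fibre_maps_le:
  assumes "finite Q"
  shows "card (even_fibre_maps m Q) \<le> (card Q * m) ^ (card Q div 2)"
  using assms
proof (induction "card Q" arbitrary: Q rule: less_induct)
  case less
  show ?case
  proof (cases "odd (card Q)")
    case True
    then have "even_fibre_maps m Q = {}"
      using even_card_if_even_fibres[OF less.prems] by (auto simp: even_fibre_maps_def)
    then show ?thesis by simp
  next
    case False
    show ?thesis
    proof (cases "Q = {}")
      case True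
      then show ?thesis by (simp add: even_fibre_maps_def even_fibres_def)
    next
      case Q: False
      then obtain x where x: "x \<in> Q" by auto
      then have "card Q \<noteq> 0" using less.prems by auto
      then have card2: "2 \<le> card Q" and half: "card Q div 2 = Suc ((card Q - 2) div 2)"
        using False by presburger+
      have IH: "card (even_fibre_maps m (Q - {x, y})) \<le> ((card Q - 2) * m) ^ ((card Q - 2) div 2)"
        if y: "y \<in> Q - {x}" for y
      proof -
        have "card {x, y} = 2" using y by auto
        then have "card (Q - {x, y}) = card Q - 2" using x y less.prems by (simp add: card_Diff_subset)
        then show ?thesis using less.hyps[of "Q - {x, y}"] card2 less.prems by simp
      qed
      have "card (even_fibre_maps m Q) \<le> (\<Sum>y\<in>Q - {x}. m * card (even_fibre_maps m (Q - {x, y})))"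
        by (rule card_even_fibre_maps_le_sum[OF less.prems x])
      also have "\<dots> \<le> (\<Sum>y\<in>Q - {x}. m * ((card Q - 2) * m) ^ ((card Q - 2) div 2))"
        by (intro sum_mono mult_le_mono2 IH)
      also have "\<dots> = (card Q - 1) * m * ((card Q - 2) * m) ^ ((card Q - 2) div 2)"
        using x less.prems by simp
      also have "\<dots> \<le> (card Q * m) * (card Q * m) ^ ((card Q - 2) div 2)"
        by (intro mult_mono power_mono) auto
      also have "\<dots> = (card Q * m) ^ (card Q div 2)"
        by (simp only: half power_Suc)
      finally show ?thesis .
    qed
  qed
qed

lemma card_PiE_even_fibres_le:
  assumes "finite P" "Q \<subseteq> P"
  shows "card {r \<in> P \<rightarrow>\<^sub>E {..<m}. even_fibres r Q}
    \<le> card (even_fibre_maps m Q) * m ^ (card P - card Q)"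
proof -
  define R where "R = {r \<in> P \<rightarrow>\<^sub>E {..<m}. even_fibres r Q}"
  have fin: "finite Q" using assms finite_subset by auto
  have "inj_on (\<lambda>r. (restrict r Q, restrict r (P - Q))) R"
  proof (rule inj_onI)
    fix r r' assume "r \<in> R" "r' \<in> R"
      and "(restrict r Q, restrict r (P - Q)) = (restrict r' Q, restrict r' (P - Q))"
    then have "r \<in> P \<rightarrow>\<^sub>E {..<m}" "r' \<in> P \<rightarrow>\<^sub>E {..<m}"
      and "restrict r Q = restrict r' Q" "restrict r (P - Q) = restrict r' (P - Q)"
      by (auto simp: R_def)
    then show "r = r'"
      by (intro ext) (metis Diff_iff PiE_arb restrict_apply')
  qed
  moreover have "(\<lambda>r. (restrict r Q, restrict r (P - Q))) ` R
    \<subseteq> even_fibre_maps m Q \<times> ((P - Q) \<rightarrow>\<^sub>E {..<m})"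
  proof -
    have "restrict r Q \<in> even_fibre_maps m Q" "restrict r (P - Q) \<in> (P - Q) \<rightarrow>\<^sub>E {..<m}"
      if "r \<in> R" for r
    proof -
      have "r \<in> P \<rightarrow>\<^sub>E {..<m}" "even_fibres (restrict r Q) Q"
        using that even_fibres_cong[of Q "restrict r Q" r] by (simp_all add: R_def)
      then show "restrict r Q \<in> even_fibre_maps m Q" "restrict r (P - Q) \<in> (P - Q) \<rightarrow>\<^sub>E {..<m}"
        using assms(2) by (auto simp: even_fibre_maps_def)
    qed
    then show ?thesis by blast
  qed
  moreover have "finite (even_fibre_maps m Q \<times> ((P - Q) \<rightarrow>\<^sub>E {..<m}))"
    using assms(1) fin by (simp add: finite_even_fibre_maps finite_PiE)
  ultimately have "card R \<le> card (even_fibre_maps m Q \<times> ((P - Q) \<rightarrow>\<^sub>E {..<m}))"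
    by (rule card_inj_on_le)
  also have "\<dots> = card (even_fibre_maps m Q) * m ^ (card P - card Q)"
    using assms fin by (simp add: card_cartesian_product card_PiE card_Diff_subset)
  finally show ?thesis unfolding R_def .
qed

lemma card_PiE_value_count_ge_le:
  assumes "finite P"
  shows "card {r \<in> P \<rightarrow>\<^sub>E {..<m}. K \<le> card {p \<in> P. r p = i}} \<le> (card P choose K) * m ^ (card P - K)"
proof -
  define U where "U = {S. S \<subseteq> P \<and> card S = K}"
  define B where "B S = PiE P (\<lambda>p. if p \<in> S then {i} else {..<m})" for S
  have cover: "{r \<in> P \<rightarrow>\<^sub>E {..<m}. K \<le> card {p \<in> P. r p = i}} \<subseteq> (\<Union>S\<in>U. B S)"
  proof
    fix r assume r: "r \<in> {r \<in> P \<rightarrow>\<^sub>E {..<m}. K \<le> card {p \<in> P. r p = i}}"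
    then obtain S where S: "S \<subseteq> {p \<in> P. r p = i}" "card S = K"
      by (metis (no_types, lifting) mem_Collect_eq obtain_subset_with_card_n)
    then have "S \<in> U" by (auto simp: U_def)
    moreover have "r \<in> B S" using r S by (auto simp: B_def PiE_def Pi_def)
    ultimately show "r \<in> (\<Union>S\<in>U. B S)" by auto
  qed
  have card_B: "card (B S) = m ^ (card P - K)" if "S \<in> U" for S
  proof -
    have S: "S \<subseteq> P" "card S = K" using that by (auto simp: U_def)
    have "card (B S) = (\<Prod>p\<in>P. card (if p \<in> S then {i} else {..<m}))"
      unfolding B_def using assms by (simp add: card_PiE)
    also have "\<dots> = (\<Prod>p\<in>P. if p \<in> S then 1 else m)"
      by (intro prod.cong) auto
    also have "\<dots> = m ^ card (P - S)"
      using assms S by (simp add: prod.If_cases Int_absorb1 Diff_eq[symmetric] inf_commute)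
    also have "card (P - S) = card P - K" using S assms by (simp add: card_Diff_subset finite_subset)
    finally show ?thesis .
  qed
  have "finite U" unfolding U_def using assms by auto
  have "card {r \<in> P \<rightarrow>\<^sub>E {..<m}. K \<le> card {p \<in> P. r p = i}} \<le> card (\<Union>S\<in>U. B S)"
    using cover \<open>finite U\<close> assms by (intro card_mono) (auto simp: B_def intro!: finite_PiE)
  also have "\<dots> \<le> (\<Sum>S\<in>U. card (B S))" using \<open>finite U\<close> by (rule card_UN_le)
  also have "\<dots> = (\<Sum>S\<in>U. m ^ (card P - K))" using card_B by simp
  also have "\<dots> = (card P choose K) * m ^ (card P - K)"
    using n_subsets[OF assms] by (simp add: U_def)
  finally show ?thesis .
qed

lemma gf2_cols_lin_indepI:
  assumes "finite S"
    and "\<And>T. T \<subseteq> S \<Longrightarrow> T \<noteq> {} \<Longrightarrow> \<exists>i<m. (\<Sum>j\<in>T. A i j) \<noteq> 0"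
  shows "gf2_cols_lin_indep m A S"
  unfolding gf2_cols_lin_indep_def
proof (intro allI impI ballI)
  fix f :: "nat \<Rightarrow> bit" and j0
  assume zero: "\<forall>i<m. (\<Sum>j\<in>S. f j * A i j) = 0" and "j0 \<in> S"
  define T where "T = {j \<in> S. f j \<noteq> 0}"
  have sum_T: "(\<Sum>j\<in>S. f j * A i j) = (\<Sum>j\<in>T. A i j)" for i
  proof -
    have "(\<Sum>j\<in>S. f j * A i j) = (\<Sum>j\<in>T. f j * A i j)"
      by (rule sum.mono_neutral_right[OF assms(1)]) (auto simp: T_def)
    also have "\<dots> = (\<Sum>j\<in>T. A i j)" by (intro sum.cong) (auto simp: T_def)
    finally show ?thesis .
  qed
  have "T = {}"
  proof (rule ccontr)
    assume "T \<noteq> {}"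
    then obtain i where "i < m" "(\<Sum>j\<in>T. A i j) \<noteq> 0"
      using assms(2)[of T] by (auto simp: T_def)
    then show False using zero sum_T by metis
  qed
  then show "f j0 = 0" using \<open>j0 \<in> S\<close> unfolding T_def by blast
qed

definition parity_matrix :: "nat \<Rightarrow> (nat \<times> nat \<Rightarrow> nat) \<Rightarrow> nat \<Rightarrow> nat \<Rightarrow> bit" where
  "parity_matrix d r i j = of_nat (card {k. k < d \<and> r (j, k) = i})"

lemma parity_matrix_nonzero_imp:
  "parity_matrix d r i j \<noteq> 0 \<Longrightarrow> \<exists>k<d. r (j, k) = i"
  unfolding parity_matrix_def by (metis (mono_tags, lifting) Collect_empty_eq card.empty of_nat_0)

lemma card_parity_matrix_column_le: "card {i. i < m \<and> parity_matrix d r i j \<noteq> 0} \<le> d"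
proof -
  have "{i. i < m \<and> parity_matrix d r i j \<noteq> 0} \<subseteq> (\<lambda>k. r (j, k)) ` {..<d}"
    by (blast dest: parity_matrix_nonzero_imp)
  then have "card {i. i < m \<and> parity_matrix d r i j \<noteq> 0} \<le> card ((\<lambda>k. r (j, k)) ` {..<d})"
    by (intro card_mono) auto
  also have "\<dots> \<le> d" using card_image_le[of "{..<d}" "\<lambda>k. r (j, k)"] by simp
  finally show ?thesis .
qed

lemma card_parity_matrix_row_le:
  "card {j. j < n \<and> parity_matrix d r i j \<noteq> 0} \<le> card {p \<in> {..<n} \<times> {..<d}. r p = i}"
proof -
  have "{j. j < n \<and> parity_matrix d r i j \<noteq> 0} \<subseteq> fst ` {p \<in> {..<n} \<times> {..<d}. r p = i}"
  proof
    fix j assume "j \<in> {j. j < n \<and> parity_matrix d r i j \<noteq> 0}"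
    then obtain k where "j < n" "k < d" "r (j, k) = i" by (blast dest: parity_matrix_nonzero_imp)
    then show "j \<in> fst ` {p \<in> {..<n} \<times> {..<d}. r p = i}" by (force intro: image_eqI[of j fst "(j, k)"])
  qed
  then have "card {j. j < n \<and> parity_matrix d r i j \<noteq> 0} \<le> card (fst ` {p \<in> {..<n} \<times> {..<d}. r p = i})"
    by (intro card_mono) auto
  also have "\<dots> \<le> card {p \<in> {..<n} \<times> {..<d}. r p = i}" by (rule card_image_le) simp
  finally show ?thesis .
qed

lemma sum_parity_matrix:
  assumes "finite T"
  shows "(\<Sum>j\<in>T. parity_matrix d r i j) = of_nat (card {p \<in> T \<times> {..<d}. r p = i})"
proof -
  have "{p \<in> T \<times> {..<d}. r p = i} = Sigma T (\<lambda>j. {k. k < d \<and> r (j, k) = i})" by auto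
  then show ?thesis using assms by (simp add: parity_matrix_def)
qed

lemma even_fibres_if_parity_matrix_columns_sum_zero:
  assumes "finite T" "r ` (T \<times> {..<d}) \<subseteq> {..<m}"
    and "\<forall>i<m. (\<Sum>j\<in>T. parity_matrix d r i j) = 0"
  shows "even_fibres r (T \<times> {..<d})"
  unfolding even_fibres_def
proof
  fix v
  show "even (card {p \<in> T \<times> {..<d}. r p = v})"
  proof (cases "v < m")
    case True
    then have "(of_nat (card {p \<in> T \<times> {..<d}. r p = v}) :: bit) = 0"
      using assms(3) sum_parity_matrix[OF assms(1)] by metis
    then have "even (of_nat (card {p \<in> T \<times> {..<d}. r p = v}) :: bit)" by (metis even_zero)
    then show ?thesis by (simp only: even_of_nat_iff)
  next
    case False
    then have "{p \<in> T \<times> {..<d}. r p = v} = {}" using assms(2) by auto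
    then show ?thesis by (simp only: card.empty even_zero)
  qed
qed

lemma square_le_nine_power: "3 \<le> d \<Longrightarrow> real d ^ 2 \<le> 9 ^ (d - 2)"
proof (induction d rule: dec_induct)
  case base
  then show ?case by simp
next
  case (step k)
  have "real (Suc k) ^ 2 \<le> (3 * real k) ^ 2"
    using step.hyps by (intro power_mono) auto
  also have "\<dots> = 9 * real k ^ 2" by (simp add: power_mult_distrib)
  also have "\<dots> \<le> 9 * 9 ^ (k - 2)" using step.IH by simp
  also have "\<dots> = 9 ^ Suc (k - 2)" by simp
  also have "Suc (k - 2) = Suc k - 2" using step.hyps by simp
  finally show ?case .
qed

lemma power_ineq_if_le_sparsity_bound:
  fixes t :: real
  assumes d: "3 \<le> d" and "0 < m" "0 < n" "0 \<le> t"
    and t: "t \<le> 1 / 1296 / real d * (real m ^ d / real n ^ 2) powr (1 / (real d - 2))"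
  shows "144 * real n ^ 2 * t ^ (d - 2) * real d ^ d \<le> real m ^ d"
proof -
  define X where "X = real m ^ d / real n ^ 2"
  have "X > 0" using assms by (simp add: X_def)
  have "1296 * real d * t \<le> X powr (1 / (real d - 2))"
    using t d unfolding X_def by (simp add: field_simps)
  then have "(1296 * real d * t) ^ (d - 2) \<le> (X powr (1 / (real d - 2))) ^ (d - 2)"
    using assms by (intro power_mono) auto
  also have "\<dots> = X"
    using \<open>X > 0\<close> d by (simp add: powr_realpow[symmetric] powr_powr of_nat_diff)
  finally have X_bound: "1296 ^ (d - 2) * (real d * t) ^ (d - 2) \<le> X"
    by (simp add: power_mult_distrib mult.assoc)
  \<comment> \<open>1296 = 9 * 144, and 9 ^ (d - 2) absorbs the factor d^2\<close>
  have "(144::real) \<le> 144 ^ (d - 2)"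
    using power_increasing[of 1 "d - 2" "144::real"] d by simp
  then have "real d ^ 2 * 144 \<le> 9 ^ (d - 2) * 144 ^ (d - 2)"
    by (intro mult_mono square_le_nine_power[OF d]) auto
  also have "\<dots> = 1296 ^ (d - 2)" by (simp flip: power_mult_distrib)
  finally have "real d ^ 2 * 144 * (real d * t) ^ (d - 2) \<le> 1296 ^ (d - 2) * (real d * t) ^ (d - 2)"
    using \<open>0 \<le> t\<close> by (intro mult_right_mono) auto
  also note X_bound
  finally have "real d ^ 2 * 144 * (real d * t) ^ (d - 2) \<le> X" .
  moreover have "real d ^ d = real d ^ 2 * real d ^ (d - 2)"
  proof -
    have "d = 2 + (d - 2)" using d by simp
    then show ?thesis by (metis power_add)
  qed
  ultimately show ?thesis
    using \<open>0 < n\<close> by (simp add: X_def field_simps power_mult_distrib)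
qed

lemma binomial_mult_power_half_le:
  fixes n m d t :: nat
  assumes "2 \<le> d" "even (t * d)"
    and "144 * real n ^ 2 * real t ^ (d - 2) * real d ^ d \<le> real m ^ d"
  shows "real (n choose t) * real (t * d) ^ (t * d div 2) * 4 ^ t \<le> real m ^ (t * d div 2)"
proof (rule power2_le_imp_le)
  define C where "C = real (n choose t)"
  define q where "q = t * d div 2"
  have q: "t * d = 2 * q" using assms(2) by (simp add: q_def)
  have split_t: "real t ^ (t * d) = (real t ^ t) ^ 2 * (real t ^ (d - 2)) ^ t"
  proof -
    have "t * d = t * 2 + (d - 2) * t" using assms(1) by (simp add: algebra_simps)
    then show ?thesis by (metis power_add power_mult)
  qed
  have split_d: "real d ^ (t * d) = (real d ^ d) ^ t"
    by (simp add: power_mult[symmetric] mult.commute)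
  have sq_pow: "(x ^ t) ^ 2 = (x ^ 2) ^ t" for x :: real
    by (simp flip: power_mult add: mult.commute)
  have "(real (t * d) ^ q) ^ 2 = real (t * d) ^ (q * 2)" by (rule power_mult[symmetric])
  also have "q * 2 = t * d" using q by simp
  finally have "(real (t * d) ^ q) ^ 2 = real (t * d) ^ (t * d)" .
  moreover have "((4::real) ^ t) ^ 2 = 16 ^ t" using sq_pow[of 4] by simp
  ultimately have "(C * real (t * d) ^ q * 4 ^ t) ^ 2 = C ^ 2 * real (t * d) ^ (t * d) * 16 ^ t"
    by (simp only: power_mult_distrib)
  also have "\<dots> = (C * real t ^ t) ^ 2 * (16 * real t ^ (d - 2) * real d ^ d) ^ t"
    unfolding of_nat_mult power_mult_distrib split_t split_d by (simp add: algebra_simps)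
  also have "\<dots> \<le> ((3 * real n) ^ t) ^ 2 * (16 * real t ^ (d - 2) * real d ^ d) ^ t"
    using binomial_mult_power_le[of n t] by (intro mult_right_mono power_mono) (auto simp: C_def)
  also have "\<dots> = ((3 * real n) ^ 2 * (16 * real t ^ (d - 2) * real d ^ d)) ^ t"
    by (simp only: sq_pow power_mult_distrib)
  also have "\<dots> = (144 * real n ^ 2 * real t ^ (d - 2) * real d ^ d) ^ t"
    by (simp add: power_mult_distrib[of 3 "real n" 2] mult.assoc)
  also have "\<dots> \<le> (real m ^ d) ^ t"
    using assms(3) by (intro power_mono) auto
  also have "\<dots> = (real m ^ q) ^ 2"
    using q by (simp flip: power_mult add: mult.commute)
  finally show "(real (n choose t) * real (t * d) ^ (t * d div 2) * 4 ^ t) ^ 2 \<le> (real m ^ (t * d div 2)) ^ 2"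
    by (simp add: C_def q_def)
qed simp

lemma three_fifths_power_le:
  assumes "0 < x" "5 * ln x \<le> real K"
  shows "(3 / 5) ^ K \<le> 1 / x ^ 2"
proof -
  have "ln (3 / 5 :: real) \<le> - 2 / 5"
    using ln_le_minus_one[of "3 / 5 :: real"] by simp
  then have "real K * ln (3 / 5) \<le> real K * (- 2 / 5)"
    by (intro mult_left_mono) auto
  then have "real K * ln (3 / 5) \<le> - 2 * ln x"
    using assms(2) by linarith
  then have "exp (real K * ln (3 / 5)) \<le> exp (- 2 * ln x)" by simp
  moreover have "exp (- 2 * ln x) = 1 / x ^ 2"
    using assms(1) by (simp add: exp_minus exp_of_nat_mult[of 2, simplified] inverse_eq_divide)
  ultimately show ?thesis by (simp add: exp_of_nat_mult)
qed

lemma heavy_rows_bound: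
  fixes L K m :: nat
  assumes m: "3 \<le> m" and K: "5 * real L / real m \<le> real K" "1 \<le> K"
    and L: "real m * ln (real m) \<le> real L"
  shows "real m * real ((L choose K) * m ^ (L - K)) \<le> real m ^ L / 3"
proof (cases "K \<le> L")
  case False
  then show ?thesis by (simp add: binomial_eq_0)
next
  case True
  have "5 * ln (real m) \<le> 5 * real L / real m"
    using L m by (simp add: field_simps)
  then have lnK: "5 * ln (real m) \<le> real K" using K(1) by linarith
  have "real (L choose K) \<le> (3 * real L / real K) ^ K"
    using K(2) by (intro binomial_le_power_div) auto
  also have "\<dots> \<le> (3 / 5 * real m) ^ K"
    using K m by (intro power_mono) (auto simp: field_simps)
  also have "\<dots> = (3 / 5) ^ K * real m ^ K" by (rule power_mult_distrib)
  also have "\<dots> \<le> 1 / real m ^ 2 * real m ^ K"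
    using m lnK by (intro mult_right_mono three_fifths_power_le) auto
  finally have binom: "real (L choose K) \<le> 1 / real m ^ 2 * real m ^ K" .
  have "real m * real ((L choose K) * m ^ (L - K)) = real m * real (L choose K) * real m ^ (L - K)"
    by simp
  also have "\<dots> \<le> real m * (1 / real m ^ 2 * real m ^ K) * real m ^ (L - K)"
    using binom by (intro mult_right_mono mult_left_mono) auto
  also have "\<dots> = real m ^ L / real m"
    using m True by (simp add: power2_eq_square field_simps flip: power_add)
  also have "\<dots> \<le> real m ^ L / 3" using m by (intro divide_left_mono) auto
  finally show ?thesis .
qed

lemma sum_div_four_powers: "(\<Sum>t = 1..s. (x::real) / 4 ^ t) = x / 3 * (1 - 1 / 4 ^ s)"
proof (induction s)
  case (Suc s)
  have "(\<Sum>t = 1..Suc s. x / 4 ^ t) = (\<Sum>t = 1..s. x / 4 ^ t) + x / 4 ^ Suc s" by simp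
  also have "\<dots> = x / 3 * (1 - 1 / 4 ^ Suc s)" unfolding Suc.IH by (simp add: field_simps)
  finally show ?case .
qed simp

lemma card_even_fibres_on_block_le:
  assumes "T \<subseteq> {..<n}"
  shows "card {r \<in> ({..<n} \<times> {..<d}) \<rightarrow>\<^sub>E {..<m}. even_fibres r (T \<times> {..<d})}
    \<le> (card T * d * m) ^ (card T * d div 2) * m ^ (n * d - card T * d)"
proof -
  have "T \<times> {..<d} \<subseteq> {..<n} \<times> {..<d}" and fin: "finite T"
    using assms by (auto intro: finite_subset)
  then have "card {r \<in> ({..<n} \<times> {..<d}) \<rightarrow>\<^sub>E {..<m}. even_fibres r (T \<times> {..<d})}
      \<le> card (even_fibre_maps m (T \<times> {..<d})) * m ^ (n * d - card T * d)"
    using card_PiE_even_fibres_le[of "{..<n} \<times> {..<d}" "T \<times> {..<d}" m]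
    by (simp add: card_cartesian_product)
  also have "\<dots> \<le> (card T * d * m) ^ (card T * d div 2) * m ^ (n * d - card T * d)"
    using card_even_fibre_maps_le[of "T \<times> {..<d}" m] fin
    by (intro mult_le_mono1) (simp add: card_cartesian_product)
  finally show ?thesis .
qed

lemma dependency_count_le_four_power:
  fixes n m d t :: nat
  assumes "2 \<le> d" "even (t * d)" "t \<le> n"
    and "144 * real n ^ 2 * real t ^ (d - 2) * real d ^ d \<le> real m ^ d"
  shows "real ((n choose t) * ((t * d * m) ^ (t * d div 2) * m ^ (n * d - t * d)))
    \<le> real m ^ (n * d) / 4 ^ t"
proof -
  define q where "q = t * d div 2"
  have "q + q + (n * d - t * d) = n * d"
    using assms(2,3) mult_le_mono1[of t n d] by (auto simp: q_def)
  then have md: "real m ^ (n * d) = real m ^ q * real m ^ q * real m ^ (n * d - t * d)"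
    by (metis power_add)
  have "real ((n choose t) * ((t * d * m) ^ q * m ^ (n * d - t * d))) * 4 ^ t
      = real (n choose t) * real (t * d) ^ q * 4 ^ t * real m ^ q * real m ^ (n * d - t * d)"
    by (simp add: power_mult_distrib)
  also have "\<dots> \<le> real m ^ q * real m ^ q * real m ^ (n * d - t * d)"
    using binomial_mult_power_half_le[OF assms(1,2,4)]
    by (intro mult_right_mono) (auto simp: q_def)
  finally show ?thesis by (simp add: md q_def pos_le_divide_eq)
qed

lemma card_dependent_assignments_le:
  fixes n d m t :: nat
  assumes "2 \<le> d" "144 * real n ^ 2 * real t ^ (d - 2) * real d ^ d \<le> real m ^ d"
  shows "real (card {r \<in> ({..<n} \<times> {..<d}) \<rightarrow>\<^sub>E {..<m}.
      \<exists>T \<subseteq> {..<n}. card T = t \<and> even_fibres r (T \<times> {..<d})})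
    \<le> real m ^ (n * d) / 4 ^ t"
proof -
  define U where "U = {T. T \<subseteq> {..<n} \<and> card T = t}"
  define Dep where
    "Dep T = {r \<in> ({..<n} \<times> {..<d}) \<rightarrow>\<^sub>E {..<m}. even_fibres r (T \<times> {..<d})}" for T
  have eq: "{r \<in> ({..<n} \<times> {..<d}) \<rightarrow>\<^sub>E {..<m}.
      \<exists>T \<subseteq> {..<n}. card T = t \<and> even_fibres r (T \<times> {..<d})} = (\<Union>T\<in>U. Dep T)"
    by (auto simp: U_def Dep_def)
  show ?thesis
  proof (cases "even (t * d) \<and> t \<le> n")
    case True
    have "card (\<Union>T\<in>U. Dep T) \<le> (\<Sum>T\<in>U. card (Dep T))"
      by (rule card_UN_le) (simp add: U_def)
    also have "\<dots> \<le> (\<Sum>T\<in>U. (t * d * m) ^ (t * d div 2) * m ^ (n * d - t * d))"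
      by (intro sum_mono) (auto simp: U_def Dep_def intro: card_even_fibres_on_block_le)
    also have "\<dots> = (n choose t) * ((t * d * m) ^ (t * d div 2) * m ^ (n * d - t * d))"
      by (simp add: U_def n_subsets)
    finally have "real (card (\<Union>T\<in>U. Dep T))
        \<le> real ((n choose t) * ((t * d * m) ^ (t * d div 2) * m ^ (n * d - t * d)))"
      by (rule of_nat_mono)
    also have "\<dots> \<le> real m ^ (n * d) / 4 ^ t"
      using True assms by (intro dependency_count_le_four_power) auto
    finally show ?thesis unfolding eq .
  next
    case False
    have "Dep T = {}" if "T \<in> U" for T
      using even_card_if_even_fibres[of "T \<times> {..<d}"] that False card_mono[of "{..<n}" T]
      by (auto simp: U_def Dep_def card_cartesian_product finite_subset)
    then show ?thesis unfolding eq by simp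
  qed
qed

lemma card_short_dependency_assignments_less:
  fixes n d m s :: nat
  assumes "2 \<le> d" "0 < m"
    and "\<And>t. t \<le> s \<Longrightarrow> 144 * real n ^ 2 * real t ^ (d - 2) * real d ^ d \<le> real m ^ d"
  shows "real (card {r \<in> ({..<n} \<times> {..<d}) \<rightarrow>\<^sub>E {..<m}.
      \<exists>T \<subseteq> {..<n}. T \<noteq> {} \<and> card T \<le> s \<and> even_fibres r (T \<times> {..<d})})
    < real m ^ (n * d) / 3"
    (is "real (card ?Short) < _")
proof -
  define Dep where "Dep t = {r \<in> ({..<n} \<times> {..<d}) \<rightarrow>\<^sub>E {..<m}.
      \<exists>T \<subseteq> {..<n}. card T = t \<and> even_fibres r (T \<times> {..<d})}" for t
  have "?Short \<subseteq> (\<Union>t\<in>{1..s}. Dep t)"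
  proof clarify
    fix r T assume "r \<in> ({..<n} \<times> {..<d}) \<rightarrow>\<^sub>E {..<m}" "T \<subseteq> {..<n}" "T \<noteq> {}" "card T \<le> s"
      "even_fibres r (T \<times> {..<d})"
    moreover from this have "card T \<in> {1..s}"
      using finite_subset[of T "{..<n}"] by (simp add: Suc_le_eq card_gt_0_iff)
    ultimately show "r \<in> (\<Union>t\<in>{1..s}. Dep t)" unfolding Dep_def by blast
  qed
  moreover have "finite (\<Union>t\<in>{1..s}. Dep t)"
    unfolding Dep_def by (rule finite_subset[of _ "({..<n} \<times> {..<d}) \<rightarrow>\<^sub>E {..<m}"]) (auto intro: finite_PiE)
  ultimately have "card ?Short \<le> card (\<Union>t\<in>{1..s}. Dep t)" by (rule card_mono[rotated])
  also have "\<dots> \<le> (\<Sum>t = 1..s. card (Dep t))" by (rule card_UN_le) simp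
  finally have "real (card ?Short) \<le> (\<Sum>t = 1..s. real (card (Dep t)))"
    unfolding of_nat_sum[symmetric] by (rule of_nat_mono)
  also have "\<dots> \<le> (\<Sum>t = 1..s. real m ^ (n * d) / 4 ^ t)"
  proof (rule sum_mono)
    fix t assume "t \<in> {1..s}"
    then show "real (card (Dep t)) \<le> real m ^ (n * d) / 4 ^ t"
      unfolding Dep_def by (intro card_dependent_assignments_le assms(1) assms(3)) simp
  qed
  also have "\<dots> = real m ^ (n * d) / 3 * (1 - 1 / 4 ^ s)" by (rule sum_div_four_powers)
  also have "\<dots> < real m ^ (n * d) / 3" using assms(2) by simp
  finally show ?thesis .
qed

lemma card_heavy_row_assignments_le:
  fixes L K m :: nat
  assumes "finite P" "card P = L" "3 \<le> m" "5 * real L / real m \<le> real K" "1 \<le> K"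
    "real m * ln (real m) \<le> real L"
  shows "real (card {r \<in> P \<rightarrow>\<^sub>E {..<m}. \<exists>i<m. K \<le> card {p \<in> P. r p = i}}) \<le> real m ^ L / 3"
proof -
  have "finite (\<Union>i<m. {r \<in> P \<rightarrow>\<^sub>E {..<m}. K \<le> card {p \<in> P. r p = i}})"
    by (rule finite_subset[OF _ finite_PiE[OF assms(1), of "\<lambda>_. {..<m}"]]) auto
  then have "card {r \<in> P \<rightarrow>\<^sub>E {..<m}. \<exists>i<m. K \<le> card {p \<in> P. r p = i}}
      \<le> card (\<Union>i<m. {r \<in> P \<rightarrow>\<^sub>E {..<m}. K \<le> card {p \<in> P. r p = i}})"
    by (rule card_mono) blast
  also have "\<dots> \<le> (\<Sum>i<m. card {r \<in> P \<rightarrow>\<^sub>E {..<m}. K \<le> card {p \<in> P. r p = i}})"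
    by (rule card_UN_le) simp
  also have "\<dots> \<le> (\<Sum>i<m. (L choose K) * m ^ (L - K))"
    using card_PiE_value_count_ge_le[OF assms(1), of m K] assms(2) by (intro sum_mono) simp
  also have "\<dots> = m * ((L choose K) * m ^ (L - K))" by simp
  finally have "real (card {r \<in> P \<rightarrow>\<^sub>E {..<m}. \<exists>i<m. K \<le> card {p \<in> P. r p = i}})
      \<le> real m * real ((L choose K) * m ^ (L - K))"
    by (simp only: of_nat_mult[symmetric] of_nat_le_iff)
  also have "\<dots> \<le> real m ^ L / 3"
    using assms(3-) by (rule heavy_rows_bound)
  finally show ?thesis .
qed

lemma obtain_outside_two_subsets:
  assumes "card B + card C < card A" "finite A" "B \<subseteq> A" "C \<subseteq> A"
  obtains x where "x \<in> A" "x \<notin> B" "x \<notin> C"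
proof -
  have "\<not> A \<subseteq> B \<union> C"
  proof
    assume "A \<subseteq> B \<union> C"
    then have "card A \<le> card (B \<union> C)"
      using assms by (intro card_mono) (auto intro: finite_subset)
    then show False using card_Un_le[of B C] assms(1) by linarith
  qed
  then show ?thesis using that by blast
qed

lemma good_assignment_exists:
  fixes d m n s :: nat
  assumes "2 \<le> d" "3 \<le> m" "real m * ln (real m) \<le> real (n * d)"
    and "\<And>t. t \<le> s \<Longrightarrow> 144 * real n ^ 2 * real t ^ (d - 2) * real d ^ d \<le> real m ^ d"
  obtains r where "r \<in> ({..<n} \<times> {..<d}) \<rightarrow>\<^sub>E {..<m}"
    and "\<And>T. T \<subseteq> {..<n} \<Longrightarrow> T \<noteq> {} \<Longrightarrow> card T \<le> s \<Longrightarrow> \<not> even_fibres r (T \<times> {..<d})"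
    and "\<And>i. i < m \<Longrightarrow> real (card {p \<in> {..<n} \<times> {..<d}. r p = i}) \<le> 5 * real d * real n / real m"
proof -
  define P where "P = {..<n} \<times> {..<d}"
  define x where "x = 5 * real d * real n / real m"
  define K where "K = nat \<lfloor>x\<rfloor> + 1"
  have "0 \<le> x" by (simp add: x_def)
  then have K: "real K = of_int \<lfloor>x\<rfloor> + 1" by (simp add: K_def)
  then have "x \<le> real K" using floor_correct[of x] by linarith
  define Dep where "Dep = {r \<in> P \<rightarrow>\<^sub>E {..<m}.
      \<exists>T \<subseteq> {..<n}. T \<noteq> {} \<and> card T \<le> s \<and> even_fibres r (T \<times> {..<d})}"
  define Heavy where "Heavy = {r \<in> P \<rightarrow>\<^sub>E {..<m}. \<exists>i<m. K \<le> card {p \<in> P. r p = i}}"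
  have "real (card Dep) < real m ^ (n * d) / 3"
    unfolding Dep_def P_def using assms by (intro card_short_dependency_assignments_less) auto
  moreover have "real (card Heavy) \<le> real m ^ (n * d) / 3"
    unfolding Heavy_def using assms(2,3) \<open>x \<le> real K\<close>
    by (intro card_heavy_row_assignments_le)
       (auto simp: P_def K_def x_def card_cartesian_product field_simps)
  moreover have "real (card (P \<rightarrow>\<^sub>E {..<m})) = real m ^ (n * d)"
    by (simp add: P_def card_PiE card_cartesian_product)
  ultimately have "real (card Dep + card Heavy) < real (card (P \<rightarrow>\<^sub>E {..<m}))" by simp
  then have "card Dep + card Heavy < card (P \<rightarrow>\<^sub>E {..<m})" by (simp only: of_nat_less_iff)
  moreover have "finite (P \<rightarrow>\<^sub>E {..<m})" by (simp add: P_def finite_PiE)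
  ultimately obtain r where r: "r \<in> P \<rightarrow>\<^sub>E {..<m}" and "r \<notin> Dep" "r \<notin> Heavy"
    by (rule obtain_outside_two_subsets) (auto simp: Dep_def Heavy_def)
  show ?thesis
  proof (rule that)
    show "r \<in> ({..<n} \<times> {..<d}) \<rightarrow>\<^sub>E {..<m}" using r by (simp add: P_def)
    show "\<not> even_fibres r (T \<times> {..<d})" if "T \<subseteq> {..<n}" "T \<noteq> {}" "card T \<le> s" for T
      using that r \<open>r \<notin> Dep\<close> by (auto simp: Dep_def)
    show "real (card {p \<in> {..<n} \<times> {..<d}. r p = i}) \<le> 5 * real d * real n / real m" if "i < m" for i
    proof -
      have "card {p \<in> P. r p = i} + 1 \<le> K" using that r \<open>r \<notin> Heavy\<close> by (auto simp: Heavy_def)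
      then have "real (card {p \<in> P. r p = i}) + 1 \<le> real K" by linarith
      then show ?thesis using K of_int_floor_le[of x] unfolding P_def x_def by linarith
    qed
  qed
qed

lemma parity_matrix_cols_lin_indep:
  assumes "r \<in> ({..<n} \<times> {..<d}) \<rightarrow>\<^sub>E {..<m}" "S \<subseteq> {..<n}"
    and "\<And>T. T \<subseteq> S \<Longrightarrow> T \<noteq> {} \<Longrightarrow> \<not> even_fibres r (T \<times> {..<d})"
  shows "gf2_cols_lin_indep m (parity_matrix d r) S"
proof (rule gf2_cols_lin_indepI)
  show "finite S" using assms(2) by (rule finite_subset) simp
  fix T assume T: "T \<subseteq> S" "T \<noteq> {}"
  show "\<exists>i<m. (\<Sum>j\<in>T. parity_matrix d r i j) \<noteq> 0"
  proof (rule ccontr)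
    assume "\<not> ?thesis"
    then have "even_fibres r (T \<times> {..<d})"
      using T assms(1,2) \<open>finite S\<close>
      by (intro even_fibres_if_parity_matrix_columns_sum_zero) (auto intro: finite_subset)
    then show False using assms(3) T by blast
  qed
qed

lemma sparse_matrix_with_independent_columns_exists:
  fixes d m n s :: nat
  assumes d: "3 \<le> d" and m: "3 \<le> m" and n: "0 < n" "real m * ln (real m) \<le> real (n * d)"
    and s: "real s \<le> 1 / 1296 / real d * (real m ^ d / real n ^ 2) powr (1 / (real d - 2))"
  shows "\<exists>A :: nat \<Rightarrow> nat \<Rightarrow> bit.
    (\<forall>S. S \<subseteq> {..<n} \<and> card S = s \<longrightarrow> gf2_cols_lin_indep m A S) \<and>
    (\<forall>j<n. card {i. i < m \<and> A i j \<noteq> 0} \<le> d) \<and>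
    (\<forall>i<m. real (card {j. j < n \<and> A i j \<noteq> 0}) \<le> 5 * real d * real n / real m)"
proof -
  have "144 * real n ^ 2 * real t ^ (d - 2) * real d ^ d \<le> real m ^ d" if "t \<le> s" for t
    using that s d m n by (intro power_ineq_if_le_sparsity_bound) auto
  then obtain r where r: "r \<in> ({..<n} \<times> {..<d}) \<rightarrow>\<^sub>E {..<m}"
    and indep: "\<And>T. T \<subseteq> {..<n} \<Longrightarrow> T \<noteq> {} \<Longrightarrow> card T \<le> s \<Longrightarrow> \<not> even_fibres r (T \<times> {..<d})"
    and rows: "\<And>i. i < m \<Longrightarrow>
      real (card {p \<in> {..<n} \<times> {..<d}. r p = i}) \<le> 5 * real d * real n / real m"
    using good_assignment_exists[of d m n s] d m n by auto
  show ?thesis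
  proof (intro exI[of _ "parity_matrix d r"] conjI allI impI)
    fix S assume S: "S \<subseteq> {..<n} \<and> card S = s"
    show "gf2_cols_lin_indep m (parity_matrix d r) S"
    proof (rule parity_matrix_cols_lin_indep[OF r])
      show "S \<subseteq> {..<n}" using S by simp
      show "\<not> even_fibres r (T \<times> {..<d})" if "T \<subseteq> S" "T \<noteq> {}" for T
        using that S indep[of T] card_mono[of S T] finite_subset[of S "{..<n}"] by auto
    qed
  next
    show "card {i. i < m \<and> parity_matrix d r i j \<noteq> 0} \<le> d" for j
      by (rule card_parity_matrix_column_le)
  next
    fix i assume "i < m"
    then show "real (card {j. j < n \<and> parity_matrix d r i j \<noteq> 0}) \<le> 5 * real d * real n / real m"
      using rows card_parity_matrix_row_le[of n d r i] by (meson of_nat_le_iff order_trans)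
  qed
qed

theorem lemma2p9:
  shows "\<exists>c::real. c > 0 \<and>
    (\<forall>d m n s :: nat.
       3 \<le> d \<longrightarrow> 3 \<le> m \<longrightarrow> 3 \<le> n \<longrightarrow> d \<le> m \<longrightarrow> m \<le> n \<longrightarrow>
       real n \<ge> real m * ln (real m) / real d \<longrightarrow>
       real s \<le> c / real d * (real m ^ d / real n ^ 2) powr (1 / (real d - 2)) \<longrightarrow>
       (\<exists>A :: nat \<Rightarrow> nat \<Rightarrow> bit.
          (\<forall>S. S \<subseteq> {..<n} \<and> card S = s \<longrightarrow> gf2_cols_lin_indep m A S) \<and>
          (\<forall>j<n. card {i. i < m \<and> A i j \<noteq> 0} \<le> d) \<and>
          (\<forall>i<m. real (card {j. j < n \<and> A i j \<noteq> 0}) \<le> 5 * real d * real n / real m)))"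
  by (intro exI[of _ "1 / 1296"] conjI allI impI sparse_matrix_with_independent_columns_exists)
    (auto simp: field_simps)

end
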